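(* For every integer $k\ge 1$ there exists a $3$-connected nonplanar bipartite cubic graph $G$ with $4k+2$ vertices and $K'(G,3)=2^k$.
   Context: A proper $3$-edge coloring assigns colors from $\{1,2,3\}$ to edges so that adjacent edges receive different colors. For colors $a\neq b$, an edge-Kempe chain is a connected component of the subgraph of edges colored $a$ or $b$; an edge-Kempe switch interchanges $a$ and $b$ on one chain. $K'(G,3)$ is the number of equivalence classes of proper $3$-edge colorings of $G$ under the equivalence relation generated by edge-Kempe switches. *)

theory Defs
  imports "Graph_Theory.Graph_Theory"
begin

text \<open>Simple graphs are symmetric loop-free finite pair digraphs (pair_graph);
 an undirected edge is the two-element set of its ends.\<close>

definition uedges :: "'a pair_pre_digraph \<Rightarrow> 'a set set" where
  "uedges G = {{u, v} | u v. (u, v) \<in> parcs G}"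

definition cubic :: "'a pair_pre_digraph \<Rightarrow> bool" where
  "cubic G \<longleftrightarrow> (\<forall>v \<in> pverts G. out_degree (with_proj G) v = 3)"

definition bipartite :: "'a pair_pre_digraph \<Rightarrow> bool" where
  "bipartite G \<longleftrightarrow> (\<exists>A B. A \<inter> B = {} \<and> A \<union> B = pverts G \<and>
      (\<forall>(u, v) \<in> parcs G. (u \<in> A \<and> v \<in> B) \<or> (u \<in> B \<and> v \<in> A)))"

definition connected_after_removal :: "'a pair_pre_digraph \<Rightarrow> 'a set \<Rightarrow> bool" where
  "connected_after_removal G S \<longleftrightarrow>
     (\<forall>u \<in> pverts G - S. \<forall>v \<in> pverts G - S.
        (u, v) \<in> (parcs G \<inter> ((pverts G - S) \<times> (pverts G - S)))\<^sup>*)"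

definition k_connected :: "nat \<Rightarrow> 'a pair_pre_digraph \<Rightarrow> bool" where
  "k_connected k G \<longleftrightarrow> card (pverts G) > k \<and>
     (\<forall>S \<subseteq> pverts G. card S < k \<longrightarrow> connected_after_removal G S)"

definition edge_3_colorings :: "'a pair_pre_digraph \<Rightarrow> ('a set \<Rightarrow> nat) set" where
  "edge_3_colorings G = {c. (\<forall>e \<in> uedges G. c e \<in> {1, 2, 3}) \<and>
      (\<forall>e. e \<notin> uedges G \<longrightarrow> c e = 0) \<and>
      (\<forall>e \<in> uedges G. \<forall>f \<in> uedges G. e \<noteq> f \<and> e \<inter> f \<noteq> {} \<longrightarrow> c e \<noteq> c f)}"

definition ab_edges :: "'a pair_pre_digraph \<Rightarrow> ('a set \<Rightarrow> nat) \<Rightarrow> nat \<Rightarrow> nat \<Rightarrow> 'a set set" where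
  "ab_edges G c a b = {e \<in> uedges G. c e = a \<or> c e = b}"

text \<open>Edge-Kempe chains: connected components (as edge sets) of the subgraph
 formed by the edges coloured a or b.\<close>

definition kempe_chains :: "'a pair_pre_digraph \<Rightarrow> ('a set \<Rightarrow> nat) \<Rightarrow> nat \<Rightarrow> nat \<Rightarrow> 'a set set set" where
  "kempe_chains G c a b =
     ab_edges G c a b //
       ({(e, f). e \<in> ab_edges G c a b \<and> f \<in> ab_edges G c a b \<and> e \<inter> f \<noteq> {}}\<^sup>*)"

definition kempe_switch :: "('a set \<Rightarrow> nat) \<Rightarrow> nat \<Rightarrow> nat \<Rightarrow> 'a set set \<Rightarrow> ('a set \<Rightarrow> nat)" where
  "kempe_switch c a b C = (\<lambda>e. if e \<in> C then (if c e = a then b else a) else c e)"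

definition kempe_step :: "'a pair_pre_digraph \<Rightarrow> (('a set \<Rightarrow> nat) \<times> ('a set \<Rightarrow> nat)) set" where
  "kempe_step G = {(c, c'). c \<in> edge_3_colorings G \<and>
      (\<exists>a b C. a \<in> {1, 2, 3} \<and> b \<in> {1, 2, 3} \<and> a \<noteq> b \<and>
         C \<in> kempe_chains G c a b \<and> c' = kempe_switch c a b C)}"

definition kempe_classes_count :: "'a pair_pre_digraph \<Rightarrow> nat" where
  "kempe_classes_count G =
     card (edge_3_colorings G // ((kempe_step G \<union> (kempe_step G)\<inverse>)\<^sup>*))"

end

theory Submission
  imports Defs "HOL-Combinatorics.Transposition"
begin

text \<open>The claw ladder has two poles \<open>p\<close>, \<open>q\<close> joined by three rails, paths of \<open>k\<close> vertices
  each, and \<open>k\<close> hubs, the \<open>j\<close>-th hub adjacent to the \<open>j\<close>-th vertex of every rail. Deleting at most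
  two vertices leaves some rail intact, and every other vertex still reaches it; the poles, the first hub
  and the rails form a subdivided \<open>K\<^sub>3\<^sub>,\<^sub>3\<close>.

  Removing the edges of one colour from a 3-edge colouring leaves a connected graph, so each
  Kempe chain consists of all edges of its two colours and a Kempe switch is a global transposition
  of two colours. A transposition reverses every cyclic order of colours, so the set of levels whose
  colours are cyclically ordered like those at \<open>p\<close> is invariant. Conversely, once the colours at
  \<open>p\<close> are fixed by transpositions, this set determines the colouring level by level, and every
  set of levels occurs; hence there are \<open>2\<^sup>k\<close> classes.\<close>

section \<open>The claw ladder\<close>

lemma pair_graphI_sym:
  assumes "finite (pverts G)"
    and "\<And>u v. (u, v) \<in> parcs G \<Longrightarrow> u \<in> pverts G \<and> v \<in> pverts G \<and> u \<noteq> v \<and> (v, u) \<in> parcs G"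
  shows "pair_graph G"
proof
  show "finite (pverts G)" by fact
  have "parcs G \<subseteq> pverts G \<times> pverts G" using assms(2) by auto
  then show "finite (parcs G)" using assms(1) by (meson finite_SigmaI finite_subset)
  fix e assume "e \<in> parcs G"
  then show "fst e \<in> pverts G" "snd e \<in> pverts G" "fst e \<noteq> snd e"
    using assms(2)[of "fst e" "snd e"] by auto
next
  show "symmetric G"
    unfolding symmetric_def arcs_ends_def sym_def using assms(2) by (auto simp: arc_to_ends_def)
qed

lemma less_3_cases: "(i::nat) < 3 \<longleftrightarrow> i = 0 \<or> i = 1 \<or> i = 2" by auto

definition rail :: "nat \<Rightarrow> nat \<Rightarrow> nat" where "rail j i = 3 * j + i"
definition hub :: "nat \<Rightarrow> nat \<Rightarrow> nat" where "hub k j = 3 * k + j"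
definition pole_p :: "nat \<Rightarrow> nat" where "pole_p k = 4 * k"
definition pole_q :: "nat \<Rightarrow> nat" where "pole_q k = 4 * k + 1"

definition ladder_arcs :: "nat \<Rightarrow> (nat \<times> nat) set" where
  "ladder_arcs k =
     {(rail j i, rail (Suc j) i) | j i. Suc j < k \<and> i < 3} \<union> {(rail j i, hub k j) | j i. j < k \<and> i < 3}
     \<union> {(rail 0 i, pole_p k) | i. i < 3} \<union> {(rail (k - 1) i, pole_q k) | i. i < 3}"

definition ladder :: "nat \<Rightarrow> nat pair_pre_digraph" where
  "ladder k = \<lparr>pverts = {..<4 * k + 2}, parcs = ladder_arcs k \<union> (ladder_arcs k)\<inverse>\<rparr>"

locale claw_ladder =
  fixes k :: nat
  assumes k_pos: "0 < k"
begin

abbreviation "c \<equiv> hub k"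
abbreviation "p \<equiv> pole_p k"
abbreviation "q \<equiv> pole_q k"
abbreviation "G \<equiv> ladder k"

lemma rail_eq_iff [simp]: "i < 3 \<Longrightarrow> i' < 3 \<Longrightarrow> rail j i = rail j' i' \<longleftrightarrow> j = j' \<and> i = i'"
  unfolding rail_def by presburger

lemma hub_eq_iff [simp]: "c j = c j' \<longleftrightarrow> j = j'"
  unfolding hub_def by simp

lemma rail_less: "j < k \<Longrightarrow> i < 3 \<Longrightarrow> rail j i < 3 * k"
  unfolding rail_def by linarith

lemma rail_div [simp]: "i < 3 \<Longrightarrow> rail j i div 3 = j"
  and rail_mod [simp]: "i < 3 \<Longrightarrow> rail j i mod 3 = i"
  unfolding rail_def by simp_all

lemma rail_less_hub: "j < k \<Longrightarrow> i < 3 \<Longrightarrow> rail j i < c j'"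
  and rail_less_p: "j < k \<Longrightarrow> i < 3 \<Longrightarrow> rail j i < p"
  and rail_less_q: "j < k \<Longrightarrow> i < 3 \<Longrightarrow> rail j i < q"
  using rail_less unfolding hub_def pole_p_def pole_q_def by fastforce+

lemma vertices_distinct [simp]:
  "j < k \<Longrightarrow> i < 3 \<Longrightarrow> rail j i \<noteq> c j'" "j < k \<Longrightarrow> i < 3 \<Longrightarrow> c j' \<noteq> rail j i"
  "j < k \<Longrightarrow> i < 3 \<Longrightarrow> rail j i \<noteq> p" "j < k \<Longrightarrow> i < 3 \<Longrightarrow> p \<noteq> rail j i"
  "j < k \<Longrightarrow> i < 3 \<Longrightarrow> rail j i \<noteq> q" "j < k \<Longrightarrow> i < 3 \<Longrightarrow> q \<noteq> rail j i"
  "j < k \<Longrightarrow> c j \<noteq> p" "j < k \<Longrightarrow> p \<noteq> c j" "j < k \<Longrightarrow> c j \<noteq> q" "j < k \<Longrightarrow> q \<noteq> c j"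
  "p \<noteq> q" "q \<noteq> p"
  using rail_less unfolding hub_def pole_p_def pole_q_def by fastforce+

lemma vertex_cases:
  assumes "v < 4 * k + 2"
  obtains (rail) j i where "j < k" "i < 3" "v = rail j i"
    | (hub) j where "j < k" "v = c j"
    | (p) "v = p"
    | (q) "v = q"
proof -
  consider "v < 3 * k" | "3 * k \<le> v" "v < 4 * k" | "v = 4 * k" | "v = 4 * k + 1"
    using assms by linarith
  then show ?thesis
  proof cases
    case 1
    then show ?thesis using rail[of "v div 3" "v mod 3"] unfolding rail_def
      by (metis div_mult_mod_eq less_mult_imp_div_less mod_less_divisor mult.commute zero_less_numeral)
  next
    case 2
    then show ?thesis using hub[of "v - 3 * k"] unfolding hub_def by auto
  qed (auto simp: pole_p_def pole_q_def intro: p q)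
qed

lemma verts_ladder: "pverts G = {..<4 * k + 2}"
  by (simp add: ladder_def)

lemma arcs_ladder: "parcs G = ladder_arcs k \<union> (ladder_arcs k)\<inverse>"
  by (simp add: ladder_def)

lemma vertices_in_ladder:
  "j < k \<Longrightarrow> i < 3 \<Longrightarrow> rail j i < 4 * k + 2" "j < k \<Longrightarrow> c j < 4 * k + 2"
  "p < 4 * k + 2" "q < 4 * k + 2"
  using rail_less unfolding hub_def pole_p_def pole_q_def by fastforce+

lemma ladder_arcs_iff:
  "(x, y) \<in> ladder_arcs k \<longleftrightarrow>
     (\<exists>j i. Suc j < k \<and> i < 3 \<and> x = rail j i \<and> y = rail (Suc j) i)
     \<or> (\<exists>j i. j < k \<and> i < 3 \<and> x = rail j i \<and> y = c j)
     \<or> (\<exists>i<3. x = rail 0 i \<and> y = p) \<or> (\<exists>i<3. x = rail (k - 1) i \<and> y = q)"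
  by (auto simp: ladder_arcs_def)

definition above :: "nat \<Rightarrow> nat \<Rightarrow> nat" where
  "above j i = (if j = 0 then p else rail (j - 1) i)"

definition below :: "nat \<Rightarrow> nat \<Rightarrow> nat" where
  "below j i = (if Suc j = k then q else rail (Suc j) i)"

lemma arc_from_rail:
  assumes "j < k" "i < 3"
  shows "(rail j i, w) \<in> parcs G \<longleftrightarrow> w \<in> {c j, above j i, below j i}"
proof -
  have "(rail j i, w) \<in> ladder_arcs k \<longleftrightarrow> w = c j \<or> (j = 0 \<and> w = p) \<or> (Suc j = k \<and> w = q)
      \<or> (Suc j < k \<and> w = rail (Suc j) i)"
    unfolding ladder_arcs_iff using assms by auto
  moreover have "(w, rail j i) \<in> ladder_arcs k \<longleftrightarrow> 0 < j \<and> w = rail (j - 1) i"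
  proof
    assume "0 < j \<and> w = rail (j - 1) i"
    then show "(w, rail j i) \<in> ladder_arcs k" unfolding ladder_arcs_iff using assms
      by (intro disjI1 exI[of _ "j - 1"] exI[of _ i]) auto
  qed (use assms in \<open>auto simp: ladder_arcs_iff\<close>)
  ultimately show ?thesis
    using assms unfolding arcs_ladder above_def below_def by auto
qed

lemma arc_from_hub: "j < k \<Longrightarrow> (c j, w) \<in> parcs G \<longleftrightarrow> (\<exists>i<3. w = rail j i)"
  and arc_from_p: "(p, w) \<in> parcs G \<longleftrightarrow> (\<exists>i<3. w = rail 0 i)"
  and arc_from_q: "(q, w) \<in> parcs G \<longleftrightarrow> (\<exists>i<3. w = rail (k - 1) i)"
  unfolding arcs_ladder
  by (simp_all only: Un_iff converse_iff ladder_arcs_iff) (use k_pos in \<open>auto simp: rail_less\<close>)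

lemma ladder_arcsI:
  "j < k \<Longrightarrow> i < 3 \<Longrightarrow> (rail j i, c j) \<in> parcs G"
  "i < 3 \<Longrightarrow> (rail 0 i, p) \<in> parcs G"
  "i < 3 \<Longrightarrow> (rail (k - 1) i, q) \<in> parcs G"
  "Suc j < k \<Longrightarrow> i < 3 \<Longrightarrow> (rail j i, rail (Suc j) i) \<in> parcs G"
  unfolding arcs_ladder ladder_arcs_def by blast+

lemma ladder_arc_sym: "(u, v) \<in> parcs G \<Longrightarrow> (v, u) \<in> parcs G"
  unfolding arcs_ladder by auto

lemma ladder_arc_ends: "(u, v) \<in> parcs G \<Longrightarrow> u < 4 * k + 2 \<and> v < 4 * k + 2 \<and> u \<noteq> v"
  unfolding arcs_ladder Un_iff converse_iff ladder_arcs_iff using k_pos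
  by (auto simp: rail_def hub_def pole_p_def pole_q_def)

lemma neighbours_distinct:
  assumes "j < k" "i < 3"
  shows "c j \<noteq> above j i" "c j \<noteq> below j i" "above j i \<noteq> below j i"
  using assms unfolding above_def below_def by auto

lemma pair_graph_ladder: "pair_graph G"
  by (rule pair_graphI_sym) (auto simp: verts_ladder ladder_arc_sym dest: ladder_arc_ends)

lemma neighbourhood:
  assumes "v < 4 * k + 2"
  shows "card {w. (v, w) \<in> parcs G} = 3"
  using assms
proof (cases rule: vertex_cases)
  case (rail j i)
  then have "{w. (v, w) \<in> parcs G} = {c j, above j i, below j i}" using arc_from_rail by auto
  then show ?thesis using neighbours_distinct[OF rail(1,2)] by simp
next
  case (hub j)
  then have "{w. (v, w) \<in> parcs G} = {rail j 0, rail j 1, rail j 2}"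
    using arc_from_hub by (auto simp: less_3_cases)
  then show ?thesis by simp
next
  case p
  then have "{w. (v, w) \<in> parcs G} = {rail 0 0, rail 0 1, rail 0 2}"
    using arc_from_p by (auto simp: less_3_cases)
  then show ?thesis by simp
next
  case q
  then have "{w. (v, w) \<in> parcs G} = {rail (k - 1) 0, rail (k - 1) 1, rail (k - 1) 2}"
    using arc_from_q by (auto simp: less_3_cases)
  then show ?thesis by simp
qed

lemma cubic_ladder: "cubic G"
  unfolding cubic_def
proof
  fix v assume v: "v \<in> pverts G"
  have "out_arcs (with_proj G) v = Pair v ` {w. (v, w) \<in> parcs G}"
    unfolding out_arcs_def by auto
  then have "out_degree (with_proj G) v = card {w. (v, w) \<in> parcs G}"
    unfolding out_degree_def by (simp add: card_image inj_on_def)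
  then show "out_degree (with_proj G) v = 3" using neighbourhood v by (simp add: verts_ladder)
qed

definition side :: "nat \<Rightarrow> bool" where
  "side v = (if v < 3 * k then even (v div 3) else if v < 4 * k then odd (v - 3 * k)
     else if v = 4 * k then False else odd (k - 1))"

lemma bipartite_ladder: "bipartite G"
proof -
  let ?A = "{v \<in> pverts G. side v}"
  let ?B = "{v \<in> pverts G. \<not> side v}"
  have "side (rail j i) = even j" if "j < k" "i < 3" for j i
    unfolding side_def using that rail_less by (simp add: rail_def)
  moreover have "side (c j) = odd j" if "j < k" for j
    unfolding side_def using that by (simp add: hub_def)
  moreover have "\<not> side p" "side q = odd (k - 1)"
    unfolding side_def pole_p_def pole_q_def by simp_all
  ultimately have "side x \<noteq> side y" if "(x, y) \<in> ladder_arcs k" for x y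
    using that k_pos unfolding ladder_arcs_iff by auto
  then have "\<forall>(u, v) \<in> parcs G. (u \<in> ?A \<and> v \<in> ?B) \<or> (u \<in> ?B \<and> v \<in> ?A)"
    using ladder_arc_ends by (fastforce simp: verts_ladder arcs_ladder)
  then show ?thesis unfolding bipartite_def by (intro exI[of _ ?A] exI[of _ ?B]) auto
qed

lemma card_verts_ladder: "card (pverts G) = 4 * k + 2"
  by (simp add: verts_ladder)

end

section \<open>3-connectivity\<close>

lemma subset_of_two:
  assumes "finite S" "card S < 3" "x \<in> S" "y \<in> S" "x \<noteq> y"
  shows "S \<subseteq> {x, y}"
proof
  fix z assume z: "z \<in> S"
  show "z \<in> {x, y}"
  proof (rule ccontr)
    assume "z \<notin> {x, y}"
    then have "card {z, x, y} = 3" using assms(5) by auto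
    moreover have "card {z, x, y} \<le> card S" using assms z by (intro card_mono) auto
    ultimately show False using assms(2) by simp
  qed
qed

context claw_ladder
begin

definition surviving_arcs :: "nat set \<Rightarrow> (nat \<times> nat) set" where
  "surviving_arcs S = parcs G \<inter> ((pverts G - S) \<times> (pverts G - S))"

lemma surviving_arc:
  "(u, v) \<in> parcs G \<Longrightarrow> u \<notin> S \<Longrightarrow> v \<notin> S \<Longrightarrow> (u, v) \<in> (surviving_arcs S)\<^sup>*"
  using ladder_arc_ends[of u v] by (intro r_into_rtrancl) (auto simp: surviving_arcs_def verts_ladder)

lemma surviving_path_sym: "(u, v) \<in> (surviving_arcs S)\<^sup>* \<Longrightarrow> (v, u) \<in> (surviving_arcs S)\<^sup>*"
proof (rule symD[OF sym_rtrancl])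
  show "sym (surviving_arcs S)" unfolding surviving_arcs_def sym_def using ladder_arc_sym by auto
qed

lemma rail_path:
  assumes "i < 3" "b < k" "a \<le> b" "\<And>j. a \<le> j \<Longrightarrow> j \<le> b \<Longrightarrow> rail j i \<notin> S"
  shows "(rail a i, rail b i) \<in> (surviving_arcs S)\<^sup>*"
  using assms(2-4)
proof (induction b)
  case (Suc b)
  show ?case
  proof (cases "a = Suc b")
    case False
    then have "(rail a i, rail b i) \<in> (surviving_arcs S)\<^sup>*" using Suc by auto
    moreover have "(rail b i, rail (Suc b) i) \<in> (surviving_arcs S)\<^sup>*"
      using Suc.prems False assms(1) by (intro surviving_arc ladder_arcsI) auto
    ultimately show ?thesis by (rule rtrancl_trans)
  qed simp
qed simp

lemma intact_rail:
  assumes "finite S" "card S < 3"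
  obtains i where "i < 3" "\<And>j. rail j i \<notin> S"
proof -
  have "\<exists>i<3. i \<notin> (\<lambda>v. v mod 3) ` S"
  proof (rule ccontr)
    assume "\<not> ?thesis"
    then have "{0, 1, 2} \<subseteq> (\<lambda>v. v mod 3) ` S" by auto
    then have "card {0, 1, 2 :: nat} \<le> card ((\<lambda>v. v mod 3) ` S)"
      by (rule card_mono[OF finite_imageI[OF assms(1)]])
    then show False using card_image_le[OF assms(1), of "\<lambda>v. v mod 3"] assms(2) by simp
  qed
  then obtain i where "i < 3" "i \<notin> (\<lambda>v. v mod 3) ` S" by blast
  then have "rail j i \<notin> S" for j by (metis image_eqI rail_mod)
  then show ?thesis using that \<open>i < 3\<close> by blast
qed

text \<open>If the hub of level \<open>j\<close> is deleted and the way from \<open>rail j i\<close> up to \<open>p\<close> is blocked,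
  both deleted vertices are used up, so the way down to \<open>q\<close> is free.\<close>

lemma downward_route_free:
  assumes "finite S" "card S < 3" "j < k" "i < 3" "rail j i \<notin> S" "c j \<in> S"
    and blocked: "s \<in> S" "s = p \<or> (\<exists>j' \<le> j. s = rail j' i)"
  shows "q \<notin> S" "\<And>j'. j \<le> j' \<Longrightarrow> j' < k \<Longrightarrow> rail j' i \<notin> S"
proof -
  have "c j \<noteq> s" using blocked(2) assms(3,4) by (auto simp del: hub_eq_iff)
  then have two: "S \<subseteq> {c j, s}" using subset_of_two[OF assms(1,2,6) blocked(1)] by blast
  have "q \<noteq> s" using blocked(2) assms(3,4) by auto
  then show "q \<notin> S" using two assms(3) by auto
  show "rail j' i \<notin> S" if "j \<le> j'" "j' < k" for j'
  proof
    assume "rail j' i \<in> S"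
    then have "rail j' i = s" using two that assms(4) by auto
    then show False using blocked assms(4,5) that by auto
  qed
qed

lemma rail_vertex_reaches_intact_rail:
  assumes S: "finite S" "card S < 3" and i0: "i0 < 3" "\<And>j. rail j i0 \<notin> S"
    and ji: "j < k" "i < 3" "rail j i \<notin> S"
  shows "(rail 0 i0, rail j i) \<in> (surviving_arcs S)\<^sup>*"
proof -
  let ?R = "(surviving_arcs S)\<^sup>*"
  have along_i0: "(rail 0 i0, rail j' i0) \<in> ?R" if "j' < k" for j'
    using rail_path[of i0 j' 0 S] i0 that by auto
  consider "c j \<notin> S" | "c j \<in> S" "p \<notin> S" "\<forall>j' \<le> j. rail j' i \<notin> S"
    | s where "c j \<in> S" "s \<in> S" "s = p \<or> (\<exists>j' \<le> j. s = rail j' i)" by blast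
  then show ?thesis
  proof cases
    case 1
    have "(rail j i0, c j) \<in> ?R" "(c j, rail j i) \<in> ?R"
      using 1 i0 ji ladder_arcsI(1)[OF ji(1)] ladder_arc_sym by (simp_all add: surviving_arc)
    then show ?thesis using along_i0[OF ji(1)] by (meson rtrancl_trans)
  next
    case 2
    have "(rail 0 i0, p) \<in> ?R" "(p, rail 0 i) \<in> ?R"
      using 2 i0 ji ladder_arcsI(2) ladder_arc_sym by (simp_all add: surviving_arc)
    moreover have "(rail 0 i, rail j i) \<in> ?R" using 2 ji by (intro rail_path) auto
    ultimately show ?thesis by (meson rtrancl_trans)
  next
    case (3 s)
    note free = downward_route_free[OF S ji 3]
    have "(rail j i, rail (k - 1) i) \<in> ?R" using free ji by (intro rail_path) auto
    moreover have "(rail (k - 1) i, q) \<in> ?R" "(q, rail (k - 1) i0) \<in> ?R"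
      using free k_pos ji i0 ladder_arcsI(3) ladder_arc_sym by (simp_all add: surviving_arc)
    ultimately have "(rail j i, rail (k - 1) i0) \<in> ?R" by (meson rtrancl_trans)
    then show ?thesis using along_i0[of "k - 1"] k_pos surviving_path_sym
      by (meson diff_less rtrancl_trans zero_less_one)
  qed
qed

lemma three_connected_ladder: "k_connected 3 G"
  unfolding k_connected_def
proof (intro conjI allI impI)
  show "3 < card (pverts G)" using card_verts_ladder k_pos by simp
next
  fix S assume "S \<subseteq> pverts G" "card S < 3"
  then have S: "finite S" "card S < 3" using finite_subset by (auto simp: verts_ladder)
  obtain i0 where i0: "i0 < 3" "\<And>j. rail j i0 \<notin> S" using intact_rail[OF S] by blast
  let ?R = "(surviving_arcs S)\<^sup>*"
  have reach: "(rail 0 i0, u) \<in> ?R" if "u \<in> pverts G - S" for u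
  proof -
    have u: "u < 4 * k + 2" "u \<notin> S" using that by (auto simp: verts_ladder)
    from u(1) show ?thesis
    proof (cases rule: vertex_cases)
      case (rail j i)
      then show ?thesis using rail_vertex_reaches_intact_rail[OF S i0] u(2) by blast
    next
      case (hub j)
      have "(rail j i0, u) \<in> ?R" using hub u(2) i0 ladder_arcsI(1) by (simp add: surviving_arc)
      then show ?thesis
        using rail_vertex_reaches_intact_rail[OF S i0 hub(1) i0] by (meson rtrancl_trans)
    next
      case p
      then show ?thesis using u(2) i0 ladder_arcsI(2) by (simp add: surviving_arc)
    next
      case q
      have "(rail (k - 1) i0, u) \<in> ?R" using q u(2) i0 ladder_arcsI(3) by (simp add: surviving_arc)
      moreover have "(rail 0 i0, rail (k - 1) i0) \<in> ?R"
        using rail_vertex_reaches_intact_rail[OF S i0 _ i0] k_pos by simp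
      ultimately show ?thesis by (meson rtrancl_trans)
    qed
  qed
  show "connected_after_removal G S"
    unfolding connected_after_removal_def surviving_arcs_def[symmetric]
    using reach surviving_path_sym by (meson rtrancl_trans)
qed

end

section \<open>Nonplanarity\<close>

lemma pair_bidirected_digraph_if_pair_graph: "pair_graph H \<Longrightarrow> pair_bidirected_digraph H"
proof -
  assume "pair_graph H"
  then interpret pair_graph H .
  show ?thesis by unfold_locales
qed

lemma wf_digraph_if_pair_graph: "pair_graph H \<Longrightarrow> wf_digraph (with_proj H)"
proof -
  assume "pair_graph H"
  then interpret pair_graph H .
  show ?thesis by unfold_locales
qed

context claw_ladder
begin

text \<open>The subgraph formed by \<open>p\<close>, \<open>c 0\<close>, \<open>q\<close> and the first \<open>d i + 1\<close> vertices of each rail \<open>i\<close>,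
  the last of them joined to \<open>q\<close>. For \<open>d = 0\<close> it is \<open>K\<^sub>3\<^sub>,\<^sub>3\<close>; lengthening a rail by one
  vertex subdivides its arc into \<open>q\<close>.\<close>

definition rail_segments :: "(nat \<Rightarrow> nat) \<Rightarrow> (nat \<times> nat) set" where
  "rail_segments d = {(rail j i, rail (Suc j) i) | j i. i < 3 \<and> j < d i}"

definition rail_ends :: "(nat \<Rightarrow> nat) \<Rightarrow> (nat \<times> nat) set" where
  "rail_ends d = {(rail (d i) i, q) | i. i < 3}"

definition top_spokes :: "(nat \<times> nat) set" where
  "top_spokes = {(rail 0 i, p) | i. i < 3} \<union> {(rail 0 i, c 0) | i. i < 3}"

definition truncated_arcs :: "(nat \<Rightarrow> nat) \<Rightarrow> (nat \<times> nat) set" where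
  "truncated_arcs d = top_spokes \<union> rail_segments d \<union> rail_ends d"

definition truncated_ladder :: "(nat \<Rightarrow> nat) \<Rightarrow> nat pair_pre_digraph" where
  "truncated_ladder d =
     \<lparr>pverts = {p, c 0, q} \<union> {rail j i | j i. i < 3 \<and> j \<le> d i},
      parcs = truncated_arcs d \<union> (truncated_arcs d)\<inverse>\<rparr>"

definition valid_depths :: "(nat \<Rightarrow> nat) \<Rightarrow> bool" where
  "valid_depths d \<longleftrightarrow> (\<forall>i<3. d i < k)"

lemma truncated_arcs_iff:
  "(x, y) \<in> truncated_arcs d \<longleftrightarrow>
     (\<exists>i<3. x = rail 0 i \<and> (y = p \<or> y = c 0))
     \<or> (\<exists>j i. i < 3 \<and> j < d i \<and> x = rail j i \<and> y = rail (Suc j) i)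
     \<or> (\<exists>i<3. x = rail (d i) i \<and> y = q)"
  unfolding truncated_arcs_def top_spokes_def rail_segments_def rail_ends_def by auto

lemma truncated_ladder_verts_subset:
  assumes "valid_depths d"
  shows "pverts (truncated_ladder d) \<subseteq> pverts G"
proof -
  have "rail j i \<in> pverts G" if "i < 3" "j \<le> d i" for i j
    using that assms vertices_in_ladder(1)[of j i] unfolding valid_depths_def verts_ladder by force
  then show ?thesis using k_pos vertices_in_ladder unfolding truncated_ladder_def verts_ladder by auto
qed

lemma pair_graph_truncated_ladder:
  assumes "valid_depths d"
  shows "pair_graph (truncated_ladder d)"
proof (rule pair_graphI_sym)
  show "finite (pverts (truncated_ladder d))"
    using truncated_ladder_verts_subset[OF assms] by (rule finite_subset) (simp add: verts_ladder)
next
  let ?V = "pverts (truncated_ladder d)"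
  have rail_in: "rail j i \<in> ?V" if "i < 3" "j \<le> d i" for j i
    using that unfolding truncated_ladder_def by auto
  have poles_in: "p \<in> ?V" "c 0 \<in> ?V" "q \<in> ?V" unfolding truncated_ladder_def by auto
  have "x \<in> ?V \<and> y \<in> ?V \<and> x \<noteq> y" if "(x, y) \<in> truncated_arcs d" for x y
    using that unfolding truncated_arcs_iff
  proof (elim disjE exE conjE)
    fix i assume "i < 3" "x = rail 0 i" "y = p"
    then show ?thesis using rail_in[where j = 0 and i = i] poles_in k_pos by auto
  next
    fix i assume "i < 3" "x = rail 0 i" "y = c 0"
    then show ?thesis using rail_in[where j = 0 and i = i] poles_in k_pos by auto
  next
    fix j i assume "i < 3" "j < d i" "x = rail j i" "y = rail (Suc j) i"
    then show ?thesis using rail_in[where j = j and i = i] rail_in[where j = "Suc j" and i = i] by auto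
  next
    fix i assume "i < 3" "x = rail (d i) i" "y = q"
    then show ?thesis
      using rail_in[where j = "d i" and i = i] poles_in assms unfolding valid_depths_def by auto
  qed
  moreover have "parcs (truncated_ladder d) = truncated_arcs d \<union> (truncated_arcs d)\<inverse>"
    by (simp add: truncated_ladder_def)
  ultimately show "u \<in> ?V \<and> v \<in> ?V \<and> u \<noteq> v \<and> (v, u) \<in> parcs (truncated_ladder d)"
    if "(u, v) \<in> parcs (truncated_ladder d)" for u v
    using that by auto
qed

lemma full_truncated_ladder_arcs: "parcs (truncated_ladder (\<lambda>_. k - 1)) \<subseteq> parcs G"
proof -
  have "(x, y) \<in> parcs G" if "(x, y) \<in> truncated_arcs (\<lambda>_. k - 1)" for x y
    using that k_pos ladder_arcsI unfolding truncated_arcs_iff by auto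
  then show ?thesis using ladder_arc_sym unfolding truncated_ladder_def by auto
qed

lemma truncated_ladder_K33: "K\<^bsub>3,3\<^esub> (with_proj (truncated_ladder (\<lambda>_. 0)))"
proof -
  let ?U = "{p, c 0, q}" and ?V = "{rail 0 0, rail 0 1, rail 0 2}"
  have three: "{f i | i. i < (3::nat)} = {f 0, f 1, f 2}" for f :: "nat \<Rightarrow> 'a"
    unfolding less_3_cases by blast
  have "(x, y) \<in> truncated_arcs (\<lambda>_. 0) \<longleftrightarrow> x \<in> ?V \<and> y \<in> ?U" for x y
    unfolding truncated_arcs_iff less_3_cases by blast
  then have "truncated_arcs (\<lambda>_. 0) = ?V \<times> ?U"
    by (simp only: set_eq_iff split_paired_All mem_Sigma_iff simp_thms)
  then have A: "parcs (truncated_ladder (\<lambda>_. 0)) = ?U \<times> ?V \<union> ?V \<times> ?U"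
    unfolding truncated_ladder_def pair_pre_digraph.simps by (simp only: converse_Times Un_commute)
  have "{rail j i | j i. i < 3 \<and> j \<le> 0} = {rail 0 i | i. i < 3}" by auto
  then have V: "pverts (truncated_ladder (\<lambda>_. 0)) = ?U \<union> ?V"
    unfolding truncated_ladder_def pair_pre_digraph.simps three by simp
  have disj: "?U \<inter> ?V = {}" and card: "card ?U = 3" "card ?V = 3" using k_pos by auto
  have fin: "finite (pverts (truncated_ladder (\<lambda>_. 0)))" unfolding V by simp
  show ?thesis unfolding complete_bipartite_digraph_pair_def
    by (intro conjI[OF fin] exI[of _ ?U] exI[of _ ?V] conjI V A disj card)
qed

lemma rail_segments_extend:
  assumes "i0 < 3"
  shows "rail_segments (d(i0 := Suc (d i0))) =
    insert (rail (d i0) i0, rail (Suc (d i0)) i0) (rail_segments d)"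
  using assms unfolding rail_segments_def by (auto simp: less_Suc_eq split: if_splits)

lemma rail_ends_extend:
  assumes "i0 < 3"
  shows "rail_ends (d(i0 := Suc (d i0))) =
    insert (rail (Suc (d i0)) i0, q) (rail_ends d - {(rail (d i0) i0, q)})"
  using assms unfolding rail_ends_def by (auto split: if_splits)

lemma truncated_ladder_extend:
  assumes "valid_depths d" "i0 < 3" "Suc (d i0) < k"
  shows "subdivide (truncated_ladder d) (rail (d i0) i0, q) (rail (Suc (d i0)) i0)
      = truncated_ladder (d(i0 := Suc (d i0)))"
proof -
  let ?u = "rail (d i0) i0" and ?w = "rail (Suc (d i0)) i0" and ?d = "d(i0 := Suc (d i0))"
  have "(?u, q) \<notin> top_spokes \<union> rail_segments d"
    using assms k_pos unfolding valid_depths_def top_spokes_def rail_segments_def by auto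
  then have A: "truncated_arcs ?d = (truncated_arcs d - {(?u, q)}) \<union> {(?u, ?w), (?w, q)}"
    unfolding truncated_arcs_def rail_segments_extend[OF assms(2)] rail_ends_extend[OF assms(2)] by auto
  have "(q, ?u) \<notin> truncated_arcs d"
    using assms(1) unfolding valid_depths_def truncated_arcs_iff by auto
  then have "parcs (subdivide (truncated_ladder d) (?u, q) ?w) = parcs (truncated_ladder ?d)"
    unfolding arcs_subdivide truncated_ladder_def pair_pre_digraph.simps A by auto
  moreover have "pverts (subdivide (truncated_ladder d) (?u, q) ?w) = pverts (truncated_ladder ?d)"
    unfolding verts_subdivide truncated_ladder_def using assms(2)
    by (auto simp: le_Suc_eq split: if_splits)
  ultimately show ?thesis by (simp add: pair_pre_digraph.equality)
qed

lemma truncated_ladder_cong: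
  assumes "\<And>i. i < 3 \<Longrightarrow> d i = d' i"
  shows "truncated_ladder d = truncated_ladder d'"
proof -
  have "{rail j i | j i. i < 3 \<and> j \<le> d i} = {rail j i | j i. i < 3 \<and> j \<le> d' i}"
    using assms by force
  moreover have "rail_segments d = rail_segments d'" "rail_ends d = rail_ends d'"
    unfolding rail_segments_def rail_ends_def using assms by force+
  ultimately show ?thesis unfolding truncated_ladder_def truncated_arcs_def by simp
qed

lemma truncated_ladder_subdivision:
  "valid_depths d \<Longrightarrow> subdivision_pair (truncated_ladder (\<lambda>_. 0)) (truncated_ladder d)"
proof (induction "d 0 + d 1 + d 2" arbitrary: d)
  case 0
  then have "truncated_ladder d = truncated_ladder (\<lambda>_. 0)"
    by (intro truncated_ladder_cong) (auto simp: less_3_cases)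
  then show ?case
    using pair_graph_truncated_ladder[OF "0.prems"]
    by (auto intro: subdivision_pair_base pair_bidirected_digraph_if_pair_graph)
next
  case (Suc n)
  have "\<exists>i0<3. 0 < d i0"
  proof (rule ccontr)
    assume "\<not> ?thesis"
    then have "d 0 = 0" "d 1 = 0" "d 2 = 0" by auto
    then show False using Suc.hyps(2) by simp
  qed
  then obtain i0 where i0: "i0 < 3" "0 < d i0" by blast
  let ?d = "d(i0 := d i0 - 1)"
  have d: "d = ?d(i0 := Suc (?d i0))" using i0 by auto
  have valid: "valid_depths ?d" using Suc.prems unfolding valid_depths_def by auto
  have "?d 0 + ?d 1 + ?d 2 = n" using Suc.hyps(2) i0 by (auto simp: less_3_cases)
  then have IH: "subdivision_pair (truncated_ladder (\<lambda>_. 0)) (truncated_ladder ?d)"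
    using Suc.hyps(1) valid by blast
  have lt: "Suc (?d i0) < k" using Suc.prems i0 unfolding valid_depths_def by auto
  have "(rail (?d i0) i0, q) \<in> truncated_arcs ?d"
    using i0(1) unfolding truncated_arcs_iff by blast
  then have "(rail (?d i0) i0, q) \<in> parcs (truncated_ladder ?d)"
    unfolding truncated_ladder_def by simp
  moreover have "rail (Suc (?d i0)) i0 \<notin> pverts (truncated_ladder ?d)"
    using i0(1) lt unfolding truncated_ladder_def by auto
  ultimately show ?case
    using subdivision_pair_divide[OF _ _ IH] truncated_ladder_extend[OF valid i0(1) lt] d by metis
qed

lemma nonplanar_ladder: "\<not> kuratowski_planar (with_proj G)"
proof -
  let ?H = "truncated_ladder (\<lambda>_. k - 1)"
  have valid: "valid_depths (\<lambda>_. k - 1)" using k_pos unfolding valid_depths_def by simp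
  have "subgraph (with_proj ?H) (with_proj G)"
    unfolding subgraph_def using truncated_ladder_verts_subset[OF valid] full_truncated_ladder_arcs
      pair_graph_truncated_ladder[OF valid]
      pair_graph_ladder by (auto intro: wf_digraph_if_pair_graph)
  then show ?thesis
    unfolding kuratowski_planar_def
    using truncated_ladder_subdivision[OF valid] truncated_ladder_K33 by blast
qed

end

section \<open>Edge colourings and Kempe switches\<close>

lemma uedgesI: "(u, v) \<in> parcs G \<Longrightarrow> {u, v} \<in> uedges G"
  unfolding uedges_def by blast

lemma uedgesE:
  assumes "e \<in> uedges G"
  obtains u v where "(u, v) \<in> parcs G" "e = {u, v}"
  using assms unfolding uedges_def by blast

lemma edge_3_coloring_range: "col \<in> edge_3_colorings G \<Longrightarrow> e \<in> uedges G \<Longrightarrow> col e \<in> {1, 2, 3}"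
  and edge_3_coloring_outside: "col \<in> edge_3_colorings G \<Longrightarrow> e \<notin> uedges G \<Longrightarrow> col e = 0"
  unfolding edge_3_colorings_def by blast+

lemma edge_3_coloring_proper:
  assumes "col \<in> edge_3_colorings G" "e \<in> uedges G" "f \<in> uedges G" "e \<noteq> f" "e \<inter> f \<noteq> {}"
  shows "col e \<noteq> col f"
proof -
  have "\<forall>e \<in> uedges G. \<forall>f \<in> uedges G. e \<noteq> f \<and> e \<inter> f \<noteq> {} \<longrightarrow> col e \<noteq> col f"
    using assms(1) unfolding edge_3_colorings_def mem_Collect_eq by (rule conjunct2[THEN conjunct2])
  then show ?thesis using assms(2-5) by blast
qed

lemma edge_3_coloring_adjacent:
  assumes "col \<in> edge_3_colorings G" "(w, x) \<in> parcs G" "(w, y) \<in> parcs G" "x \<noteq> y"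
  shows "col {w, x} \<noteq> col {w, y}"
proof (rule edge_3_coloring_proper[OF assms(1) uedgesI[OF assms(2)] uedgesI[OF assms(3)]])
  show "{w, x} \<noteq> {w, y}"
  proof
    assume "{w, x} = {w, y}"
    then have "x \<in> {w, y}" "y \<in> {w, x}" by blast+
    then show False using assms(4) by blast
  qed
qed simp

lemma edge_3_coloring_inj_at_vertex:
  assumes col: "col \<in> edge_3_colorings G" and arcs: "\<And>i. i \<in> I \<Longrightarrow> (w, f i) \<in> parcs G"
    and "inj_on f I"
  shows "inj_on (\<lambda>i. col {f i, w}) I"
proof (rule inj_onI)
  fix i i' assume i: "i \<in> I" "i' \<in> I" and "col {f i, w} = col {f i', w}"
  then have "col {w, f i} = col {w, f i'}" by (simp add: insert_commute)
  then have "f i = f i'" using edge_3_coloring_adjacent[OF col arcs[OF i(1)] arcs[OF i(2)]] by blast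
  then show "i = i'" using \<open>inj_on f I\<close> i by (simp add: inj_on_eq_iff)
qed

lemma edge_3_coloringI:
  assumes "sym (parcs G)"
    and "\<And>u v. (u, v) \<in> parcs G \<Longrightarrow> col {u, v} \<in> {1, 2, 3}"
    and "\<And>e. e \<notin> uedges G \<Longrightarrow> col e = 0"
    and "\<And>w x y. (w, x) \<in> parcs G \<Longrightarrow> (w, y) \<in> parcs G \<Longrightarrow> x \<noteq> y \<Longrightarrow> col {w, x} \<noteq> col {w, y}"
  shows "col \<in> edge_3_colorings G"
proof -
  have at_end: "\<exists>x. (z, x) \<in> parcs G \<and> e = {z, x}" if e: "e \<in> uedges G" and z: "z \<in> e" for e z
  proof -
    obtain u v where uv: "(u, v) \<in> parcs G" "e = {u, v}" using e by (rule uedgesE)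
    have "e = {v, u}" using uv(2) by (simp add: insert_commute)
    moreover have "z = u \<or> z = v" using uv(2) z by blast
    ultimately show ?thesis using uv symD[OF assms(1) uv(1)] by blast
  qed
  show ?thesis unfolding edge_3_colorings_def
  proof (intro CollectI conjI ballI allI impI)
    fix e assume "e \<in> uedges G"
    then show "col e \<in> {1, 2, 3}" using assms(2) by (auto elim: uedgesE)
  next
    fix e assume "e \<notin> uedges G"
    then show "col e = 0" by (rule assms(3))
  next
    fix e f assume e: "e \<in> uedges G" and f: "f \<in> uedges G" and ef: "e \<noteq> f \<and> e \<inter> f \<noteq> {}"
    then obtain z where z: "z \<in> e" "z \<in> f" by blast
    obtain x where x: "(z, x) \<in> parcs G" "e = {z, x}" using at_end[OF e z(1)] by blast
    obtain y where y: "(z, y) \<in> parcs G" "f = {z, y}" using at_end[OF f z(2)] by blast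
    have "x \<noteq> y" using ef x y by auto
    then show "col e \<noteq> col f" using assms(4)[OF x(1) y(1)] x y by simp
  qed
qed

lemma edge_3_coloring_transpose:
  assumes col: "col \<in> edge_3_colorings G" and ab: "a \<in> {1, 2, 3}" "b \<in> {1, 2, 3}"
  shows "transpose a b \<circ> col \<in> edge_3_colorings G"
  unfolding edge_3_colorings_def
proof (intro CollectI conjI ballI allI impI)
  fix e assume "e \<in> uedges G"
  then have "col e \<in> {1, 2, 3}" by (rule edge_3_coloring_range[OF col])
  then show "(transpose a b \<circ> col) e \<in> {1, 2, 3}" using ab by (auto simp: transpose_def)
next
  fix e assume "e \<notin> uedges G"
  then have "col e = 0" by (rule edge_3_coloring_outside[OF col])
  then show "(transpose a b \<circ> col) e = 0" using ab by auto
next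
  fix e f assume "e \<in> uedges G" "f \<in> uedges G" "e \<noteq> f \<and> e \<inter> f \<noteq> {}"
  then have "col e \<noteq> col f" using edge_3_coloring_proper[OF col] by blast
  then show "(transpose a b \<circ> col) e \<noteq> (transpose a b \<circ> col) f" by (auto dest: transpose_eq_imp_eq)
qed

text \<open>For distinct colours \<open>a, b \<in> {1, 2, 3}\<close>, the third colour is \<open>6 - a - b\<close>.\<close>

lemma ab_edges_avoid_third:
  assumes "col \<in> edge_3_colorings G" "a \<in> {1, 2, 3}" "b \<in> {1, 2, 3}" "a \<noteq> b"
  shows "ab_edges G col a b = {e \<in> uedges G. col e \<noteq> 6 - a - b}"
  using assms edge_3_coloring_range[OF assms(1)] unfolding ab_edges_def by fastforce

definition arcs_avoiding :: "'a pair_pre_digraph \<Rightarrow> ('a set \<Rightarrow> nat) \<Rightarrow> nat \<Rightarrow> ('a \<times> 'a) set" where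
  "arcs_avoiding G col d = {(u, v). (u, v) \<in> parcs G \<and> col {u, v} \<noteq> d}"

definition chain_adjacency ::
    "'a pair_pre_digraph \<Rightarrow> ('a set \<Rightarrow> nat) \<Rightarrow> nat \<Rightarrow> nat \<Rightarrow> ('a set \<times> 'a set) set" where
  "chain_adjacency G col a b =
     {(e, f). e \<in> ab_edges G col a b \<and> f \<in> ab_edges G col a b \<and> e \<inter> f \<noteq> {}}"

lemma walk_within_chain:
  assumes col: "col \<in> edge_3_colorings G" and ab: "a \<in> {1, 2, 3}" "b \<in> {1, 2, 3}" "a \<noteq> b"
    and walk: "(u, v) \<in> (arcs_avoiding G col (6 - a - b))\<^sup>*"
    and e: "e \<in> ab_edges G col a b" "u \<in> e"
  shows "f \<in> ab_edges G col a b \<Longrightarrow> v \<in> f \<Longrightarrow> (e, f) \<in> (chain_adjacency G col a b)\<^sup>*"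
  using walk
proof (induction arbitrary: f rule: rtrancl_induct)
  case base
  then show ?case using e unfolding chain_adjacency_def by blast
next
  case (step y z)
  then have yz: "{y, z} \<in> ab_edges G col a b"
    unfolding ab_edges_avoid_third[OF col ab] arcs_avoiding_def by (auto intro: uedgesI)
  have "(e, {y, z}) \<in> (chain_adjacency G col a b)\<^sup>*" using step.IH[OF yz] by simp
  moreover have "({y, z}, f) \<in> chain_adjacency G col a b"
    using yz step.prems unfolding chain_adjacency_def by blast
  ultimately show ?case by (rule rtrancl_into_rtrancl)
qed

lemma kempe_chains_single:
  assumes g: "g \<in> ab_edges G col a b"
    and connected: "\<And>e. e \<in> ab_edges G col a b \<Longrightarrow> (g, e) \<in> (chain_adjacency G col a b)\<^sup>*"
  shows "kempe_chains G col a b = {ab_edges G col a b}"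
proof -
  let ?R = "(chain_adjacency G col a b)\<^sup>*"
  have "sym (chain_adjacency G col a b)" unfolding chain_adjacency_def sym_def by auto
  then have sym: "sym ?R" by (rule sym_rtrancl)
  have "?R `` {x} = ab_edges G col a b" if x: "x \<in> ab_edges G col a b" for x
  proof
    show "?R `` {x} \<subseteq> ab_edges G col a b"
    proof
      fix y assume "y \<in> ?R `` {x}"
      then have "(x, y) \<in> ?R" by simp
      then show "y \<in> ab_edges G col a b"
        using x by (induction rule: rtrancl_induct) (auto simp: chain_adjacency_def)
    qed
    show "ab_edges G col a b \<subseteq> ?R `` {x}"
    proof
      fix y assume "y \<in> ab_edges G col a b"
      have "(x, g) \<in> ?R" using symD[OF sym connected[OF x]] .
      then have "(x, y) \<in> ?R" using connected[OF \<open>y \<in> ab_edges G col a b\<close>] by (rule rtrancl_trans)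
      then show "y \<in> ?R `` {x}" by simp
    qed
  qed
  then show ?thesis
    unfolding kempe_chains_def chain_adjacency_def[symmetric] quotient_def using g by blast
qed

lemma kempe_switch_whole:
  assumes "col \<in> edge_3_colorings G" "a \<in> {1, 2, 3}" "b \<in> {1, 2, 3}"
  shows "kempe_switch col a b (ab_edges G col a b) = transpose a b \<circ> col"
proof
  fix e
  have "col e \<notin> {a, b}" if "e \<notin> ab_edges G col a b"
    using that assms edge_3_coloring_outside[OF assms(1)] unfolding ab_edges_def by auto
  then show "kempe_switch col a b (ab_edges G col a b) e = (transpose a b \<circ> col) e"
    unfolding kempe_switch_def ab_edges_def by (auto simp: transpose_def)
qed

lemma kempe_step_iff_transpose:
  assumes "\<And>col a b. col \<in> edge_3_colorings G \<Longrightarrow> a \<in> {1, 2, 3} \<Longrightarrow> b \<in> {1, 2, 3} \<Longrightarrow> a \<noteq> b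
      \<Longrightarrow> kempe_chains G col a b = {ab_edges G col a b}"
  shows "(x, y) \<in> kempe_step G \<longleftrightarrow>
      x \<in> edge_3_colorings G \<and> (\<exists>a b. a \<in> {1, 2, 3} \<and> b \<in> {1, 2, 3} \<and> a \<noteq> b \<and> y = transpose a b \<circ> x)"
    (is "_ \<longleftrightarrow> ?transposition")
proof
  assume "(x, y) \<in> kempe_step G"
  then obtain a b C where x: "x \<in> edge_3_colorings G" and ab: "a \<in> {1, 2, 3}" "b \<in> {1, 2, 3}" "a \<noteq> b"
    and "C \<in> kempe_chains G x a b" and y: "y = kempe_switch x a b C"
    unfolding kempe_step_def by blast
  then have "C = ab_edges G x a b" using assms by blast
  then show ?transposition
    using x ab y kempe_switch_whole[OF x ab(1,2)] by blast
next
  assume ?transposition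
  then obtain a b where x: "x \<in> edge_3_colorings G" and ab: "a \<in> {1, 2, 3}" "b \<in> {1, 2, 3}" "a \<noteq> b"
    and y: "y = transpose a b \<circ> x" by blast
  have "ab_edges G x a b \<in> kempe_chains G x a b" using assms[OF x ab] by simp
  moreover have "y = kempe_switch x a b (ab_edges G x a b)"
    using kempe_switch_whole[OF x ab(1,2)] y by simp
  ultimately show "(x, y) \<in> kempe_step G" unfolding kempe_step_def using x ab by blast
qed

lemma card_quotient_eq_card_image:
  assumes "\<And>x. x \<in> A \<Longrightarrow> R `` {x} = {y \<in> A. f y = f x}"
  shows "card (A // R) = card (f ` A)"
proof -
  let ?F = "\<lambda>v. {y \<in> A. f y = v}"
  have "A // R = ?F ` (f ` A)" unfolding quotient_def using assms by auto
  moreover have "inj_on ?F (f ` A)" by (rule inj_onI) blast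
  ultimately show ?thesis by (simp add: card_image)
qed

section \<open>Triples of colours\<close>

definition rainbow :: "nat \<Rightarrow> nat \<Rightarrow> nat \<Rightarrow> bool" where
  "rainbow x y z \<longleftrightarrow> x \<in> {1, 2, 3} \<and> y \<in> {1, 2, 3} \<and> z \<in> {1, 2, 3} \<and> x \<noteq> y \<and> x \<noteq> z \<and> y \<noteq> z"

definition cyclic_next :: "nat \<Rightarrow> nat \<Rightarrow> bool" where
  "cyclic_next x y \<longleftrightarrow> (x = 1 \<and> y = 2) \<or> (x = 2 \<and> y = 3) \<or> (x = 3 \<and> y = 1)"

lemma inj_on_less_3: "inj_on (f :: nat \<Rightarrow> 'a) {..<3} \<longleftrightarrow> f 0 \<noteq> f 1 \<and> f 0 \<noteq> f 2 \<and> f 1 \<noteq> f 2"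
proof -
  have "{..<3 :: nat} = {0, 1, 2}" by (simp add: lessThan_nat_numeral lessThan_Suc insert_commute)
  then show ?thesis by auto
qed

lemma rainbow_third_unique: "rainbow x y z \<Longrightarrow> rainbow x y z' \<Longrightarrow> z = z'"
  unfolding rainbow_def by auto

lemma rainbow_third_distinct:
  fixes x0 x1 x2 y0 y1 y2 z0 z1 z2 :: nat
  assumes "rainbow x0 y0 z0" "rainbow x1 y1 z1" "rainbow x2 y2 z2"
    and "x0 \<noteq> x1" "x0 \<noteq> x2" "x1 \<noteq> x2" "y0 \<noteq> y1" "y0 \<noteq> y2" "y1 \<noteq> y2"
  shows "z0 \<noteq> z1 \<and> z0 \<noteq> z2 \<and> z1 \<noteq> z2"
  using assms unfolding rainbow_def by auto

lemma rainbow_inj_third: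
  fixes x y z :: "nat \<Rightarrow> nat"
  assumes "\<And>i. i < 3 \<Longrightarrow> rainbow (x i) (y i) (z i)" "inj_on x {..<3}" "inj_on y {..<3}"
  shows "inj_on z {..<3}"
  using rainbow_third_distinct[OF assms(1)[of 0] assms(1)[of 1] assms(1)[of 2]] assms(2,3)
  unfolding inj_on_less_3 by simp

lemma colour_pairs_determined:
  fixes x0 x1 x2 y0 y1 y2 y0' y1' y2' :: nat
  assumes "rainbow x0 x1 x2" "rainbow y0 y1 y2" "rainbow y0' y1' y2'"
    and "y0 \<noteq> x0" "y1 \<noteq> x1" "y2 \<noteq> x2" "y0' \<noteq> x0" "y1' \<noteq> x1" "y2' \<noteq> x2"
    and "cyclic_next x0 y0 \<longleftrightarrow> cyclic_next x0 y0'"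
  shows "y0 = y0' \<and> y1 = y1' \<and> y2 = y2'"
  using assms unfolding rainbow_def cyclic_next_def by auto

lemma colours_determined_by_orientation:
  fixes x y y' :: "nat \<Rightarrow> nat"
  assumes "\<And>i. i < 3 \<Longrightarrow> x i \<in> {1, 2, 3} \<and> y i \<in> {1, 2, 3} \<and> y' i \<in> {1, 2, 3} \<and> y i \<noteq> x i \<and> y' i \<noteq> x i"
    and "inj_on x {..<3}" "inj_on y {..<3}" "inj_on y' {..<3}"
    and "cyclic_next (x 0) (y 0) \<longleftrightarrow> cyclic_next (x 0) (y' 0)"
    and "i < 3"
  shows "y i = y' i"
proof -
  have "y 0 = y' 0 \<and> y 1 = y' 1 \<and> y 2 = y' 2"
    using assms(1)[of 0] assms(1)[of 1] assms(1)[of 2] assms(2-5)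
    by (intro colour_pairs_determined[of "x 0" "x 1" "x 2" "y 0" "y 1" "y 2" "y' 0" "y' 1" "y' 2"])
      (simp_all add: rainbow_def inj_on_less_3)
  then show ?thesis using assms(6) less_3_cases by auto
qed

lemma inj_on_less_3_avoid:
  fixes x y :: "nat \<Rightarrow> 'a"
  assumes "inj_on x {..<3}" "inj_on y {..<3}"
  obtains i where "i < 3" "x i \<noteq> d" "y i \<noteq> d"
proof -
  have "\<exists>i<3. x i \<noteq> d \<and> y i \<noteq> d"
  proof (rule ccontr)
    assume "\<not> ?thesis"
    then have "(x 0 = d \<or> y 0 = d) \<and> (x 1 = d \<or> y 1 = d) \<and> (x 2 = d \<or> y 2 = d)" by auto
    then show False using assms unfolding inj_on_less_3 by auto
  qed
  then show ?thesis using that by blast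
qed

lemma cyclic_next_transpose:
  assumes "x \<in> {1, 2, 3}" "y \<in> {1, 2, 3}" "x \<noteq> y" "a \<in> {1, 2, 3}" "b \<in> {1, 2, 3}" "a \<noteq> b"
  shows "cyclic_next (transpose a b x) (transpose a b y) \<longleftrightarrow> \<not> cyclic_next x y"
  using assms unfolding insert_iff empty_iff
  by (elim disjE) (simp_all add: cyclic_next_def transpose_def)

section \<open>Kempe classes of the claw ladder\<close>

context claw_ladder
begin

abbreviation "colourings \<equiv> edge_3_colorings G"
abbreviation "kempe_equiv \<equiv> (kempe_step G \<union> (kempe_step G)\<inverse>)\<^sup>*"

definition col_above :: "(nat set \<Rightarrow> nat) \<Rightarrow> nat \<Rightarrow> nat \<Rightarrow> nat" where
  "col_above col j i = col {rail j i, above j i}"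

definition col_hub :: "(nat set \<Rightarrow> nat) \<Rightarrow> nat \<Rightarrow> nat \<Rightarrow> nat" where
  "col_hub col j i = col {rail j i, c j}"

definition col_below :: "(nat set \<Rightarrow> nat) \<Rightarrow> nat \<Rightarrow> nat \<Rightarrow> nat" where
  "col_below col j i = col {rail j i, below j i}"

lemma sym_ladder_arcs: "sym (parcs G)"
  using ladder_arc_sym unfolding sym_def by blast

lemma rainbow_at_rail:
  assumes col: "col \<in> colourings" and ji: "j < k" "i < 3"
  shows "rainbow (col_above col j i) (col_hub col j i) (col_below col j i)"
proof -
  have arcs: "(rail j i, above j i) \<in> parcs G" "(rail j i, c j) \<in> parcs G"
      "(rail j i, below j i) \<in> parcs G"
    using arc_from_rail[OF ji] by auto
  note ne = neighbours_distinct[OF ji]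
  show ?thesis
    unfolding rainbow_def col_above_def col_hub_def col_below_def
  proof (intro conjI)
    show "col {rail j i, above j i} \<in> {1, 2, 3}" "col {rail j i, c j} \<in> {1, 2, 3}"
      "col {rail j i, below j i} \<in> {1, 2, 3}"
      using edge_3_coloring_range[OF col uedgesI] arcs by blast+
    show "col {rail j i, above j i} \<noteq> col {rail j i, c j}"
      by (rule edge_3_coloring_adjacent[OF col arcs(1,2)]) (use ne in simp)
    show "col {rail j i, above j i} \<noteq> col {rail j i, below j i}"
      by (rule edge_3_coloring_adjacent[OF col arcs(1,3)]) (use ne in simp)
    show "col {rail j i, c j} \<noteq> col {rail j i, below j i}"
      by (rule edge_3_coloring_adjacent[OF col arcs(2,3)]) (use ne in simp)
  qed
qed

lemma inj_on_rail: "inj_on (\<lambda>i. rail j i) {..<3}"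
  by (rule inj_onI) simp

lemma inj_col_hub:
  assumes "col \<in> colourings" "j < k"
  shows "inj_on (col_hub col j) {..<3}"
  unfolding col_hub_def
  using edge_3_coloring_inj_at_vertex[OF assms(1) _ inj_on_rail] ladder_arcsI(1)[OF assms(2)]
    ladder_arc_sym
  by simp

lemma inj_col_above_top:
  assumes "col \<in> colourings"
  shows "inj_on (col_above col 0) {..<3}"
  unfolding col_above_def above_def
  using edge_3_coloring_inj_at_vertex[OF assms(1) _ inj_on_rail] ladder_arcsI(2) ladder_arc_sym
  by simp

lemma inj_col_below_bottom:
  assumes "col \<in> colourings"
  shows "inj_on (col_below col (k - 1)) {..<3}"
  unfolding col_below_def below_def
  using edge_3_coloring_inj_at_vertex[OF assms(1) _ inj_on_rail] ladder_arcsI(3) ladder_arc_sym k_pos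
  by simp

lemma col_above_Suc: "Suc j < k \<Longrightarrow> col_above col (Suc j) i = col_below col j i"
  unfolding col_above_def col_below_def above_def below_def by (simp add: insert_commute)

lemma inj_col_above:
  assumes col: "col \<in> colourings"
  shows "j < k \<Longrightarrow> inj_on (col_above col j) {..<3} \<and> inj_on (col_below col j) {..<3}"
proof (induction j)
  case 0
  show ?case
    using inj_col_above_top[OF col]
      rainbow_inj_third[OF rainbow_at_rail[OF col 0] inj_col_above_top[OF col] inj_col_hub[OF col 0]]
    by blast
next
  case (Suc j)
  then have "inj_on (col_above col (Suc j)) {..<3}"
    using col_above_Suc[OF Suc.prems] by (simp cong: inj_on_cong)
  then show ?case
    using rainbow_inj_third[OF rainbow_at_rail[OF col Suc.prems] _ inj_col_hub[OF col Suc.prems]]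
    by blast
qed

text \<open>Walking down from \<open>p\<close> along edges not coloured \<open>d\<close>: at each level some rail vertex is
  entered from above, and from it the hub and then the other rail vertices are reached.\<close>

lemma reach_level:
  assumes col: "col \<in> colourings" and j: "j < k"
    and above: "\<And>i. i < 3 \<Longrightarrow> (p, above j i) \<in> (arcs_avoiding G col d)\<^sup>*"
  shows "(\<forall>i<3. (p, rail j i) \<in> (arcs_avoiding G col d)\<^sup>*) \<and> (p, c j) \<in> (arcs_avoiding G col d)\<^sup>*"
proof -
  let ?R = "(arcs_avoiding G col d)\<^sup>*"
  have avoiding: "(x, y) \<in> arcs_avoiding G col d" if "(y, x) \<in> parcs G" "col {y, x} \<noteq> d" for x y
    using that ladder_arc_sym unfolding arcs_avoiding_def by (simp add: insert_commute)
  have from_above: "(p, rail j i) \<in> ?R" if "i < 3" "col_above col j i \<noteq> d" for i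
    using rtrancl_into_rtrancl[OF above[OF that(1)] avoiding] arc_from_rail[OF j that(1)] that(2)
    unfolding col_above_def by simp
  obtain z where z: "z < 3" "col_above col j z \<noteq> d" "col_hub col j z \<noteq> d"
    using inj_on_less_3_avoid[OF conjunct1[OF inj_col_above[OF col j]] inj_col_hub[OF col j]] by blast
  have hub: "(p, c j) \<in> ?R"
    using rtrancl_into_rtrancl[OF from_above[OF z(1,2)]] z(3) ladder_arcsI(1)[OF j z(1)]
    unfolding col_hub_def arcs_avoiding_def by simp
  have "(p, rail j i) \<in> ?R" if i: "i < 3" for i
  proof (cases "col_above col j i = d")
    case True
    then have "col_hub col j i \<noteq> d" using rainbow_at_rail[OF col j i] unfolding rainbow_def by auto
    then show ?thesis
      using rtrancl_into_rtrancl[OF hub avoiding] ladder_arcsI(1)[OF j i] unfolding col_hub_def by simp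
  qed (use from_above i in simp)
  then show ?thesis using hub by blast
qed

lemma reach_levels:
  assumes col: "col \<in> colourings"
  shows "j < k \<Longrightarrow>
    (\<forall>i<3. (p, rail j i) \<in> (arcs_avoiding G col d)\<^sup>*) \<and> (p, c j) \<in> (arcs_avoiding G col d)\<^sup>*"
proof (induction j)
  case 0
  show ?case by (rule reach_level[OF col 0]) (simp add: above_def)
next
  case (Suc j)
  then show ?case by (intro reach_level[OF col Suc.prems]) (simp add: above_def)
qed

lemma avoiding_connected:
  assumes col: "col \<in> colourings" and v: "v < 4 * k + 2"
  shows "(p, v) \<in> (arcs_avoiding G col d)\<^sup>*"
  using v
proof (cases rule: vertex_cases)
  case q
  obtain i where i: "i < 3" "col_below col (k - 1) i \<noteq> d"
    using inj_on_less_3_avoid[OF inj_col_below_bottom[OF col] inj_col_below_bottom[OF col]] by blast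
  have "(rail (k - 1) i, q) \<in> arcs_avoiding G col d"
    using i ladder_arcsI(3)[OF i(1)] k_pos unfolding col_below_def below_def arcs_avoiding_def by simp
  then show ?thesis using reach_levels[OF col, of "k - 1"] i(1) q k_pos
    by (meson diff_less rtrancl_into_rtrancl zero_less_one)
qed (use reach_levels[OF col] in auto)

lemma kempe_chains_ladder:
  assumes col: "col \<in> colourings" and ab: "a \<in> {1, 2, 3}" "b \<in> {1, 2, 3}" "a \<noteq> b"
  shows "kempe_chains G col a b = {ab_edges G col a b}"
proof -
  obtain i where i: "i < 3" "col_above col 0 i \<noteq> 6 - a - b"
    using inj_on_less_3_avoid[OF inj_col_above_top[OF col] inj_col_above_top[OF col]] by blast
  have g: "{rail 0 i, p} \<in> ab_edges G col a b"
    using i uedgesI[OF ladder_arcsI(2)[OF i(1)]]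
    unfolding ab_edges_avoid_third[OF col ab] col_above_def above_def by simp
  show ?thesis
  proof (rule kempe_chains_single[OF g])
    fix e assume e: "e \<in> ab_edges G col a b"
    then obtain u v where uv: "(u, v) \<in> parcs G" "e = {u, v}"
      unfolding ab_edges_def by (blast elim: uedgesE)
    have "(p, u) \<in> (arcs_avoiding G col (6 - a - b))\<^sup>*"
      using avoiding_connected[OF col] ladder_arc_ends[OF uv(1)] by blast
    then show "({rail 0 i, p}, e) \<in> (chain_adjacency G col a b)\<^sup>*"
      using walk_within_chain[OF col ab _ g] e uv(2) by simp
  qed
qed

lemma kempe_step_ladder:
  "(x, y) \<in> kempe_step G \<longleftrightarrow>
     x \<in> colourings \<and> (\<exists>a b. a \<in> {1, 2, 3} \<and> b \<in> {1, 2, 3} \<and> a \<noteq> b \<and> y = transpose a b \<circ> x)"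
  by (rule kempe_step_iff_transpose) (rule kempe_chains_ladder)

definition oriented_levels :: "(nat set \<Rightarrow> nat) \<Rightarrow> nat set" where
  "oriented_levels col = {j. j < k \<and>
     (cyclic_next (col_above col j 0) (col_hub col j 0) \<longleftrightarrow>
      cyclic_next (col_above col 0 0) (col_above col 0 1))}"

lemma oriented_levels_transpose:
  assumes col: "col \<in> colourings" and ab: "a \<in> {1, 2, 3}" "b \<in> {1, 2, 3}" "a \<noteq> b"
  shows "oriented_levels (transpose a b \<circ> col) = oriented_levels col"
proof (rule set_eqI)
  fix j
  have rb: "rainbow (col_above col j 0) (col_hub col j 0) (col_below col j 0)" if "j < k" for j
    using rainbow_at_rail[OF col that] by simp
  have "cyclic_next (transpose a b (col_above col 0 0)) (transpose a b (col_above col 0 1))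
      \<longleftrightarrow> \<not> cyclic_next (col_above col 0 0) (col_above col 0 1)"
    using rainbow_at_rail[OF col k_pos, of 0] rainbow_at_rail[OF col k_pos, of 1]
      inj_col_above_top[OF col] ab
    unfolding rainbow_def inj_on_less_3 by (intro cyclic_next_transpose) auto
  moreover have "cyclic_next (transpose a b (col_above col j 0)) (transpose a b (col_hub col j 0))
      \<longleftrightarrow> \<not> cyclic_next (col_above col j 0) (col_hub col j 0)" if "j < k"
    using rb[OF that] ab unfolding rainbow_def by (intro cyclic_next_transpose) auto
  ultimately show "j \<in> oriented_levels (transpose a b \<circ> col) \<longleftrightarrow> j \<in> oriented_levels col"
    unfolding oriented_levels_def col_above_def col_hub_def by auto
qed

lemma kempe_equiv_oriented_levels:
  assumes "(x, y) \<in> kempe_equiv" "x \<in> colourings"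
  shows "y \<in> colourings \<and> oriented_levels y = oriented_levels x"
  using assms(1)
proof (induction rule: rtrancl_induct)
  case (step y z)
  from step(2) show ?case
  proof
    assume "(y, z) \<in> kempe_step G"
    then obtain a b where ab: "a \<in> {1, 2, 3}" "b \<in> {1, 2, 3}" "a \<noteq> b" and z: "z = transpose a b \<circ> y"
      unfolding kempe_step_ladder by blast
    have y: "y \<in> colourings" "oriented_levels y = oriented_levels x" using step.IH by blast+
    show ?thesis
      unfolding z oriented_levels_transpose[OF y(1) ab]
      using edge_3_coloring_transpose[OF y(1) ab(1,2)] y(2) by blast
  next
    assume "(y, z) \<in> (kempe_step G)\<inverse>"
    then obtain a b where z: "z \<in> colourings" and ab: "a \<in> {1, 2, 3}" "b \<in> {1, 2, 3}" "a \<noteq> b"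
      and y: "y = transpose a b \<circ> z"
      unfolding converse_iff kempe_step_ladder by blast
    have "oriented_levels y = oriented_levels z"
      unfolding y by (rule oriented_levels_transpose[OF z ab])
    then show ?thesis using z step.IH by simp
  qed
qed (use assms(2) in simp)

lemma kempe_equiv_transpose:
  assumes "col \<in> colourings" "a \<in> {1, 2, 3}" "b \<in> {1, 2, 3}" "a \<noteq> b"
  shows "(col, transpose a b \<circ> col) \<in> kempe_equiv"
proof -
  have "(col, transpose a b \<circ> col) \<in> kempe_step G" unfolding kempe_step_ladder using assms by blast
  then show ?thesis by (intro r_into_rtrancl UnI1)
qed

lemma kempe_equiv_normalise:
  assumes x: "x \<in> colourings"
  obtains y where "(x, y) \<in> kempe_equiv" "y \<in> colourings"
    "col_above y 0 0 = 1" "col_above y 0 1 = 2" "col_above y 0 2 = 3"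
proof -
  have range: "col_above col 0 i \<in> {1, 2, 3}" if "col \<in> colourings" "i < 3" for col i
    using rainbow_at_rail[OF that(1) k_pos that(2)] unfolding rainbow_def by simp
  obtain x1 where x1: "(x, x1) \<in> kempe_equiv" "x1 \<in> colourings" "col_above x1 0 0 = 1"
  proof (cases "col_above x 0 0 = 1")
    case False
    let ?x1 = "transpose (col_above x 0 0) 1 \<circ> x"
    have "col_above ?x1 0 0 = 1" by (simp add: col_above_def)
    then show ?thesis
      using that kempe_equiv_transpose[OF x range[OF x] _ False]
        edge_3_coloring_transpose[OF x range[OF x]]
      by simp
  qed (use that x in blast)
  obtain x2 where x2: "(x, x2) \<in> kempe_equiv" "x2 \<in> colourings"
    "col_above x2 0 0 = 1" "col_above x2 0 1 = 2"
  proof (cases "col_above x1 0 1 = 2")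
    case False
    let ?x2 = "transpose (col_above x1 0 1) 2 \<circ> x1"
    have "col_above x1 0 1 \<noteq> 1" using inj_col_above_top[OF x1(2)] x1(3) unfolding inj_on_less_3 by simp
    then have "col_above ?x2 0 0 = 1" "col_above ?x2 0 1 = 2"
      using x1(3) by (simp_all add: col_above_def)
    moreover have "(x, ?x2) \<in> kempe_equiv"
      using rtrancl_trans[OF x1(1) kempe_equiv_transpose[OF x1(2) range[OF x1(2)] _ False]] by simp
    ultimately show ?thesis using that edge_3_coloring_transpose[OF x1(2) range[OF x1(2)]] by simp
  qed (use that x1 in blast)
  have "col_above x2 0 2 = 3"
    using range[OF x2(2), of 2] inj_col_above_top[OF x2(2)] x2(3,4) unfolding inj_on_less_3 by auto
  then show ?thesis using that x2 by blast
qed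

lemma colourings_agree_on_levels:
  assumes x: "x \<in> colourings" and y: "y \<in> colourings"
    and top: "\<And>i. i < 3 \<Longrightarrow> col_above x 0 i = col_above y 0 i"
    and orient: "oriented_levels x = oriented_levels y"
  shows "j < k \<Longrightarrow> \<forall>i<3. col_above x j i = col_above y j i \<and> col_hub x j i = col_hub y j i
      \<and> col_below x j i = col_below y j i"
proof (induction j)
  have level: "\<forall>i<3. col_hub x j i = col_hub y j i \<and> col_below x j i = col_below y j i"
    if j: "j < k" and above: "\<forall>i<3. col_above x j i = col_above y j i" for j
  proof -
    have "cyclic_next (col_above x j 0) (col_hub x j 0) \<longleftrightarrow> cyclic_next (col_above x j 0) (col_hub y j 0)"
    proof -
      have "j \<in> oriented_levels x \<longleftrightarrow> j \<in> oriented_levels y" using orient by simp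
      then show ?thesis using top[of 0] top[of 1] above j unfolding oriented_levels_def by auto
    qed
    moreover have "col_above x j i \<in> {1, 2, 3} \<and> col_hub x j i \<in> {1, 2, 3} \<and> col_hub y j i \<in> {1, 2, 3}
        \<and> col_hub x j i \<noteq> col_above x j i \<and> col_hub y j i \<noteq> col_above x j i" if "i < 3" for i
      using rainbow_at_rail[OF x j that] rainbow_at_rail[OF y j that] above that
      unfolding rainbow_def by auto
    ultimately have hub: "col_hub x j i = col_hub y j i" if "i < 3" for i
      using colours_determined_by_orientation[OF _ conjunct1[OF inj_col_above[OF x j]]
          inj_col_hub[OF x j] inj_col_hub[OF y j] _ that] by blast
    have "col_below x j i = col_below y j i" if "i < 3" for i
      using rainbow_at_rail[OF x j that] rainbow_at_rail[OF y j that] above hub[OF that] that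
      by (intro rainbow_third_unique) auto
    then show ?thesis using hub by blast
  qed
  {
    case 0
    then show ?case using level[OF 0] top by blast
  next
    case (Suc j)
    then have "\<forall>i<3. col_above x (Suc j) i = col_above y (Suc j) i" using col_above_Suc by simp
    then show ?case using level[OF Suc.prems] by blast
  }
qed

lemma ladder_edge_cases:
  assumes "(u, v) \<in> parcs G"
  obtains j i where "j < k" "i < 3"
    "{u, v} = {rail j i, above j i} \<or> {u, v} = {rail j i, c j} \<or> {u, v} = {rail j i, below j i}"
proof -
  from ladder_arc_ends[OF assms] have "u < 4 * k + 2" by simp
  then show ?thesis
  proof (cases rule: vertex_cases)
    case (rail j i)
    then have "v = above j i \<or> v = c j \<or> v = below j i" using arc_from_rail assms by auto
    then show ?thesis using that[OF rail(1,2)] rail(3) by auto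
  next
    case (hub j)
    then obtain i where "i < 3" "v = rail j i" using arc_from_hub assms by blast
    then show ?thesis using that[of j i] hub by (auto simp: insert_commute)
  next
    case p
    then obtain i where "i < 3" "v = rail 0 i" using arc_from_p assms by blast
    then show ?thesis using that[of 0 i] p k_pos by (auto simp: insert_commute above_def)
  next
    case q
    then obtain i where "i < 3" "v = rail (k - 1) i" using arc_from_q assms by blast
    then show ?thesis using that[of "k - 1" i] q k_pos by (auto simp: insert_commute below_def)
  qed
qed

lemma colouring_determined:
  assumes x: "x \<in> colourings" and y: "y \<in> colourings"
    and top: "\<And>i. i < 3 \<Longrightarrow> col_above x 0 i = col_above y 0 i"
    and orient: "oriented_levels x = oriented_levels y"
  shows "x = y"
proof
  fix e
  show "x e = y e"
  proof (cases "e \<in> uedges G")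
    case True
    then obtain u v where uv: "(u, v) \<in> parcs G" "e = {u, v}" by (rule uedgesE)
    then obtain j i where ji: "j < k" "i < 3"
      "e = {rail j i, above j i} \<or> e = {rail j i, c j} \<or> e = {rail j i, below j i}"
      by (metis ladder_edge_cases)
    then show ?thesis using colourings_agree_on_levels[OF x y top orient ji(1)]
      unfolding col_above_def col_hub_def col_below_def by auto
  qed (use edge_3_coloring_outside[OF x] edge_3_coloring_outside[OF y] in simp)
qed

lemma kempe_equiv_iff_oriented_levels:
  assumes x: "x \<in> colourings" and y: "y \<in> colourings"
  shows "(x, y) \<in> kempe_equiv \<longleftrightarrow> oriented_levels x = oriented_levels y"
proof
  assume "(x, y) \<in> kempe_equiv"
  from kempe_equiv_oriented_levels[OF this x] show "oriented_levels x = oriented_levels y" by simp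
next
  assume orient: "oriented_levels x = oriented_levels y"
  obtain x' where x': "(x, x') \<in> kempe_equiv" "x' \<in> colourings"
    "col_above x' 0 0 = 1" "col_above x' 0 1 = 2" "col_above x' 0 2 = 3"
    using kempe_equiv_normalise[OF x] by blast
  obtain y' where y': "(y, y') \<in> kempe_equiv" "y' \<in> colourings"
    "col_above y' 0 0 = 1" "col_above y' 0 1 = 2" "col_above y' 0 2 = 3"
    using kempe_equiv_normalise[OF y] by blast
  have "oriented_levels x' = oriented_levels y'"
    using kempe_equiv_oriented_levels[OF x'(1) x] kempe_equiv_oriented_levels[OF y'(1) y] orient by simp
  moreover have "col_above x' 0 i = col_above y' 0 i" if "i < 3" for i
  proof -
    have "i = 0 \<or> i = 1 \<or> i = 2" using that less_3_cases by blast
    then show ?thesis using x'(3-5) y'(3-5) by (elim disjE) simp_all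
  qed
  ultimately have "x' = y'" using colouring_determined[OF x'(2) y'(2)] by blast
  have "sym kempe_equiv" by (rule sym_rtrancl) (rule sym_Un_converse)
  then have "(y', y) \<in> kempe_equiv" using y'(1) by (rule symD)
  then show "(x, y) \<in> kempe_equiv" using rtrancl_trans[OF x'(1)] \<open>x' = y'\<close> by simp
qed

lemma kempe_class:
  assumes "x \<in> colourings"
  shows "kempe_equiv `` {x} = {y \<in> colourings. oriented_levels y = oriented_levels x}"
proof (intro set_eqI iffI)
  fix y assume "y \<in> kempe_equiv `` {x}"
  then have "(x, y) \<in> kempe_equiv" by simp
  from kempe_equiv_oriented_levels[OF this assms]
  show "y \<in> {y \<in> colourings. oriented_levels y = oriented_levels x}" by simp
next
  fix y assume "y \<in> {y \<in> colourings. oriented_levels y = oriented_levels x}"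
  then have "y \<in> colourings" "oriented_levels x = oriented_levels y" by simp_all
  then show "y \<in> kempe_equiv `` {x}" using kempe_equiv_iff_oriented_levels[OF assms] by simp
qed

text \<open>With colours read modulo 3, the canonical colouring gives the edges above, into the hub and below
  \<open>rail j i\<close> get \<open>i + r j\<close>, \<open>i + r j + s j\<close> and \<open>i + r (j + 1)\<close>, where the shift \<open>s j\<close> is 1 on
  the levels in \<open>J\<close> and 2 elsewhere and \<open>r j = 2 (s 0 + \<dots> + s (j - 1))\<close>. An edge is recognised
  from its ends: the smaller one is always a rail vertex.\<close>

definition cyclic_colour :: "nat \<Rightarrow> nat" where
  "cyclic_colour t = t mod 3 + 1"

definition hub_shift :: "nat set \<Rightarrow> nat \<Rightarrow> nat" where
  "hub_shift J j = (if j \<in> J then 1 else 2)"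

definition rotation :: "nat set \<Rightarrow> nat \<Rightarrow> nat" where
  "rotation J j = (\<Sum>l<j. 2 * hub_shift J l)"

definition canonical_index :: "nat set \<Rightarrow> nat set \<Rightarrow> nat" where
  "canonical_index J e =
     (let u = Min e; v = Max e; j = u div 3; i = u mod 3 in
        if v = p then i
        else if v = c j then i + rotation J j + hub_shift J j
        else i + rotation J (Suc j))"

definition canonical_colouring :: "nat set \<Rightarrow> nat set \<Rightarrow> nat" where
  "canonical_colouring J e = (if e \<in> uedges G then cyclic_colour (canonical_index J e) else 0)"

lemma rotation_Suc: "rotation J (Suc j) = rotation J j + 2 * hub_shift J j"
  unfolding rotation_def by simp

lemma cyclic_colour_range: "cyclic_colour t \<in> {1, 2, 3}"
proof -
  have "t mod 3 = 0 \<or> t mod 3 = 1 \<or> t mod 3 = 2" by presburger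
  then show ?thesis unfolding cyclic_colour_def by auto
qed

lemma cyclic_colour_eq_iff: "cyclic_colour s = cyclic_colour t \<longleftrightarrow> s mod 3 = t mod 3"
  unfolding cyclic_colour_def by simp

lemma canonical_colouring_arc:
  assumes "(u, v) \<in> parcs G" "u < v"
  shows "canonical_colouring J {u, v} = cyclic_colour
    (if v = p then u mod 3
     else if v = c (u div 3) then u mod 3 + rotation J (u div 3) + hub_shift J (u div 3)
     else u mod 3 + rotation J (Suc (u div 3)))"
  using uedgesI[OF assms(1)] assms(2)
  unfolding canonical_colouring_def canonical_index_def Let_def by simp

lemma canonical_hub:
  assumes "j < k" "i < 3"
  shows "canonical_colouring J {rail j i, c j} = cyclic_colour (i + rotation J j + hub_shift J j)"
  using canonical_colouring_arc[OF ladder_arcsI(1)[OF assms] rail_less_hub[OF assms]] assms by simp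

lemma canonical_above:
  assumes "j < k" "i < 3"
  shows "canonical_colouring J {rail j i, above j i} = cyclic_colour (i + rotation J j)"
proof (cases j)
  case 0
  then show ?thesis
    using canonical_colouring_arc[OF ladder_arcsI(2)[OF assms(2)] rail_less_p[OF k_pos assms(2)]] assms
    by (simp add: above_def rotation_def)
next
  case (Suc j')
  then have "canonical_colouring J {rail j i, above j i} = canonical_colouring J {rail j' i, rail j i}"
    by (simp add: above_def insert_commute)
  also have "\<dots> = cyclic_colour (i + rotation J j)"
  proof -
    have "rail j' i < rail j i" "rail j i \<noteq> p" "rail j i \<noteq> c j'"
      using Suc assms by (simp_all add: rail_def hub_def pole_p_def)
    then show ?thesis using canonical_colouring_arc[OF ladder_arcsI(4)[of j' i]] Suc assms by simp
  qed
  finally show ?thesis .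
qed

lemma canonical_below:
  assumes "j < k" "i < 3"
  shows "canonical_colouring J {rail j i, below j i} = cyclic_colour (i + rotation J (Suc j))"
proof (cases "Suc j = k")
  case True
  then have "(rail j i, q) \<in> parcs G" using ladder_arcsI(3)[OF assms(2)] by (metis diff_Suc_1)
  then show ?thesis
    using canonical_colouring_arc[OF _ rail_less_q[OF assms]] True assms by (simp add: below_def)
next
  case False
  then have "Suc j < k" using assms(1) by simp
  moreover have "rail j i < rail (Suc j) i" "rail (Suc j) i \<noteq> p" "rail (Suc j) i \<noteq> c j"
    using False assms by (simp_all add: rail_def hub_def pole_p_def)
  ultimately show ?thesis
    using canonical_colouring_arc[OF ladder_arcsI(4)] False assms by (simp add: below_def)
qed

lemma canonical_rainbow:
  assumes "j < k" "i < 3"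
  shows "rainbow (canonical_colouring J {rail j i, above j i}) (canonical_colouring J {rail j i, c j})
    (canonical_colouring J {rail j i, below j i})"
proof -
  have "hub_shift J j = 1 \<or> hub_shift J j = 2" unfolding hub_shift_def by simp
  then show ?thesis
    unfolding canonical_above[OF assms] canonical_hub[OF assms] canonical_below[OF assms] rotation_Suc
      rainbow_def cyclic_colour_def by auto presburger+
qed

lemma canonical_colouring_proper: "canonical_colouring J \<in> colourings"
proof (rule edge_3_coloringI[OF sym_ladder_arcs])
  fix u v assume "(u, v) \<in> parcs G"
  then have "{u, v} \<in> uedges G" by (rule uedgesI)
  then show "canonical_colouring J {u, v} \<in> {1, 2, 3}"
    unfolding canonical_colouring_def using cyclic_colour_range by (simp only: if_True)
next
  fix e assume "e \<notin> uedges G"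
  then show "canonical_colouring J e = 0" unfolding canonical_colouring_def by simp
next
  fix w x y assume wx: "(w, x) \<in> parcs G" and wy: "(w, y) \<in> parcs G" and "x \<noteq> y"
  have spokes: "cyclic_colour (i + t) \<noteq> cyclic_colour (i' + t)" if "i < 3" "i' < 3" "i \<noteq> i'" for i i' t
    using that unfolding cyclic_colour_eq_iff by presburger
  from ladder_arc_ends[OF wx] have "w < 4 * k + 2" by simp
  then show "canonical_colouring J {w, x} \<noteq> canonical_colouring J {w, y}"
  proof (cases rule: vertex_cases)
    case (rail j i)
    then have "x \<in> {above j i, c j, below j i}" "y \<in> {above j i, c j, below j i}"
      using wx wy arc_from_rail by auto
    then show ?thesis using canonical_rainbow[OF rail(1,2), where J = J] \<open>x \<noteq> y\<close> rail(3)
      unfolding rainbow_def by auto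
  next
    case (hub j)
    then obtain i i' where "i < 3" "i' < 3" "x = rail j i" "y = rail j i'"
      using wx wy arc_from_hub by blast
    then show ?thesis
      using canonical_hub[where J = J] hub spokes[of i i' "rotation J j + hub_shift J j"] \<open>x \<noteq> y\<close>
      by (auto simp: insert_commute add.assoc)
  next
    case p
    then obtain i i' where "i < 3" "i' < 3" "x = rail 0 i" "y = rail 0 i'"
      using wx wy arc_from_p by blast
    then show ?thesis using canonical_above[OF k_pos, where J = J] p spokes[of i i' 0] \<open>x \<noteq> y\<close>
      by (auto simp: insert_commute above_def rotation_def)
  next
    case q
    then obtain i i' where "i < 3" "i' < 3" "x = rail (k - 1) i" "y = rail (k - 1) i'"
      using wx wy arc_from_q by blast
    then show ?thesis
      using canonical_below[of "k - 1" _ J] q k_pos spokes[of i i' "rotation J k"] \<open>x \<noteq> y\<close>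
      by (auto simp: insert_commute below_def)
  qed
qed

lemma cyclic_next_cyclic_colour:
  assumes "s = 1 \<or> s = 2"
  shows "cyclic_next (cyclic_colour t) (cyclic_colour (t + s)) \<longleftrightarrow> s = 1"
proof -
  have "(t + s) mod 3 = (t mod 3 + s) mod 3" by (simp add: mod_add_left_eq)
  moreover have "t mod 3 = 0 \<or> t mod 3 = 1 \<or> t mod 3 = 2" by presburger
  ultimately show ?thesis
    using assms unfolding cyclic_next_def cyclic_colour_def by (elim disjE) simp_all
qed

lemma oriented_levels_canonical:
  assumes "J \<subseteq> {..<k}"
  shows "oriented_levels (canonical_colouring J) = J"
proof -
  let ?col = "canonical_colouring J"
  have "rotation J 0 = 0" by (simp add: rotation_def)
  then have top: "cyclic_next (col_above ?col 0 0) (col_above ?col 0 1)"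
    using canonical_above[OF k_pos, of 0 J] canonical_above[OF k_pos, of 1 J] unfolding col_above_def
    by (simp add: cyclic_colour_def cyclic_next_def)
  have "hub_shift J j = 1 \<or> hub_shift J j = 2" for j unfolding hub_shift_def by simp
  then have "cyclic_next (col_above ?col j 0) (col_hub ?col j 0) \<longleftrightarrow> j \<in> J" if "j < k" for j
    using canonical_above[OF that, of 0 J] canonical_hub[OF that, of 0 J] cyclic_next_cyclic_colour
    unfolding col_above_def col_hub_def by (simp add: hub_shift_def)
  then show ?thesis using assms top unfolding oriented_levels_def by auto
qed

lemma oriented_levels_range: "oriented_levels ` colourings = Pow {..<k}"
proof
  show "oriented_levels ` colourings \<subseteq> Pow {..<k}" unfolding oriented_levels_def by auto
  show "Pow {..<k} \<subseteq> oriented_levels ` colourings"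
  proof
    fix J assume "J \<in> Pow {..<k}"
    then have "J = oriented_levels (canonical_colouring J)" using oriented_levels_canonical by simp
    then show "J \<in> oriented_levels ` colourings" using canonical_colouring_proper by (rule image_eqI)
  qed
qed

lemma kempe_classes_count_ladder: "kempe_classes_count G = 2 ^ k"
proof -
  have "kempe_classes_count G = card (colourings // kempe_equiv)"
    unfolding kempe_classes_count_def ..
  also have "\<dots> = card (oriented_levels ` colourings)"
    by (rule card_quotient_eq_card_image) (rule kempe_class)
  also have "\<dots> = 2 ^ k" unfolding oriented_levels_range by (simp add: card_Pow)
  finally show ?thesis .
qed

end

theorem theorem22:
  fixes k :: nat
  assumes "k \<ge> 1"
  shows "\<exists>G :: nat pair_pre_digraph.
           pair_graph G \<and> k_connected 3 G \<and> \<not> kuratowski_planar (with_proj G) \<and>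
           bipartite G \<and> cubic G \<and> card (pverts G) = 4 * k + 2 \<and>
           kempe_classes_count G = 2 ^ k"
proof -
  interpret claw_ladder k using assms by unfold_locales simp
  show ?thesis
    by (intro exI[of _ "ladder k"] conjI pair_graph_ladder three_connected_ladder nonplanar_ladder
        bipartite_ladder cubic_ladder card_verts_ladder kempe_classes_count_ladder)
qed

end
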